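(* Let $G$ be a strongly regular graph with complement $\overline{G}$. Then $G$ is $2$-e.c. if and only if both $G$ and $\overline{G}$ are connected and both $G$ and $\overline{G}$ contain a triangle.
   Context: A graph $G$ with vertex set $V$ is $n$-e.c. if for every pair of disjoint subsets $A,B\subseteq V$ with $|A\cup B|=n$ (either may be empty) there is a vertex $z\notin A\cup B$ adjacent to every vertex of $A$ and to no vertex of $B$. A strongly regular graph with parameters $(v,k,\lambda,\mu)$ is a $k$-regular graph on $v$ vertices in which every pair of adjacent vertices has exactly $\lambda$ common neighbours and every pair of distinct nonadjacent vertices has exactly $\mu$ common neighbours; it is required to have at least one edge and at least one pair of distinct nonadjacent vertices. *)

theory Defs
  imports Main
begin

definition simple_graph :: "'a set \<Rightarrow> ('a \<Rightarrow> 'a \<Rightarrow> bool) \<Rightarrow> bool" where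
  "simple_graph V E \<longleftrightarrow> finite V \<and> (\<forall>x y. E x y \<longrightarrow> x \<in> V \<and> y \<in> V)
     \<and> (\<forall>x y. E x y \<longrightarrow> E y x) \<and> (\<forall>x. \<not> E x x)"

definition compl_graph :: "'a set \<Rightarrow> ('a \<Rightarrow> 'a \<Rightarrow> bool) \<Rightarrow> ('a \<Rightarrow> 'a \<Rightarrow> bool)" where
  "compl_graph V E = (\<lambda>x y. x \<in> V \<and> y \<in> V \<and> x \<noteq> y \<and> \<not> E x y)"

definition n_ec :: "nat \<Rightarrow> 'a set \<Rightarrow> ('a \<Rightarrow> 'a \<Rightarrow> bool) \<Rightarrow> bool" where
  "n_ec n V E \<longleftrightarrow> (\<forall>A B. A \<subseteq> V \<and> B \<subseteq> V \<and> A \<inter> B = {} \<and> card (A \<union> B) = n \<longrightarrow>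
     (\<exists>z \<in> V - (A \<union> B). (\<forall>a\<in>A. E z a) \<and> (\<forall>b\<in>B. \<not> E z b)))"

definition strongly_regular_params ::
  "'a set \<Rightarrow> ('a \<Rightarrow> 'a \<Rightarrow> bool) \<Rightarrow> nat \<Rightarrow> nat \<Rightarrow> nat \<Rightarrow> nat \<Rightarrow> bool" where
  "strongly_regular_params V E v k l m \<longleftrightarrow> simple_graph V E \<and> card V = v
     \<and> (\<forall>x\<in>V. card {y\<in>V. E x y} = k)
     \<and> (\<forall>x y. E x y \<longrightarrow> card {w\<in>V. E x w \<and> E y w} = l)
     \<and> (\<forall>x\<in>V. \<forall>y\<in>V. x \<noteq> y \<and> \<not> E x y \<longrightarrow> card {w\<in>V. E x w \<and> E y w} = m)
     \<and> (\<exists>x y. E x y)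
     \<and> (\<exists>x\<in>V. \<exists>y\<in>V. x \<noteq> y \<and> \<not> E x y)"

definition strongly_regular :: "'a set \<Rightarrow> ('a \<Rightarrow> 'a \<Rightarrow> bool) \<Rightarrow> bool" where
  "strongly_regular V E \<longleftrightarrow> (\<exists>v k l m. strongly_regular_params V E v k l m)"

definition graph_connected :: "'a set \<Rightarrow> ('a \<Rightarrow> 'a \<Rightarrow> bool) \<Rightarrow> bool" where
  "graph_connected V E \<longleftrightarrow> (\<forall>x\<in>V. \<forall>y\<in>V. E\<^sup>*\<^sup>* x y)"

definition has_triangle :: "('a \<Rightarrow> 'a \<Rightarrow> bool) \<Rightarrow> bool" where
  "has_triangle E \<longleftrightarrow> (\<exists>x y z. x \<noteq> y \<and> y \<noteq> z \<and> x \<noteq> z \<and> E x y \<and> E y z \<and> E x z)"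

end

theory Submission
  imports Defs
begin

(*
  For a simple graph G with complement G', being 2-e.c. splits into three
  properties of pairs of distinct vertices x, y:
    (1) x and y have a common neighbour in G,
    (2) x and y have a common neighbour in G' (a common non-neighbour in G),
    (3) some neighbour of x other than y is not adjacent to y.
  (1) alone gives connectivity (diameter at most 2) and, applied to an edge, a triangle;
  by (2) the same holds for G'.  This is the forward direction.

  Conversely, let G be strongly regular with parameters (v,k,lambda,mu).  A triangle gives
  lambda > 0, and connectivity together with a non-edge gives mu > 0 (if mu = 0, adjacency
  would be transitive, so a connected G would be complete); hence (1).  The complement of a
  strongly regular graph is strongly regular (inclusion-exclusion), so the same argument
  yields (2).  For (3) with x, y adjacent: otherwise lambda = k - 1, so adjacent vertices
  have equal closed neighbourhoods, which contradicts (1) for a non-edge.  Property (3) for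
  non-adjacent x, y is property (3) for the adjacent pair y, x in G'.
*)

definition nbhd :: "'a set \<Rightarrow> ('a \<Rightarrow> 'a \<Rightarrow> bool) \<Rightarrow> 'a \<Rightarrow> 'a set" where
  "nbhd V E x = {y\<in>V. E x y}"

lemma nbhd_Int: "nbhd V E x \<inter> nbhd V E y = {w\<in>V. E x w \<and> E y w}"
  unfolding nbhd_def by blast

lemma simple_graphD:
  assumes "simple_graph V E"
  shows "finite V" "E x y \<Longrightarrow> x \<in> V" "E x y \<Longrightarrow> y \<in> V" "E x y \<Longrightarrow> E y x" "\<not> E x x"
  using assms unfolding simple_graph_def by blast+

lemma simple_graph_sym:
  assumes "simple_graph V E"
  shows "E x y \<longleftrightarrow> E y x"
  using simple_graphD(4)[OF assms] by blast

lemma compl_graph_iff: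
  "compl_graph V E x y \<longleftrightarrow> x \<in> V \<and> y \<in> V \<and> x \<noteq> y \<and> \<not> E x y"
  unfolding compl_graph_def by simp

lemma compl_simple_graph:
  assumes "simple_graph V E"
  shows "simple_graph V (compl_graph V E)"
  using assms unfolding simple_graph_def compl_graph_def by blast

lemma rtranclp_transitive_adjacency:
  assumes "F\<^sup>*\<^sup>* a b" and "\<And>x y z. F x y \<Longrightarrow> F y z \<Longrightarrow> x \<noteq> z \<Longrightarrow> F x z"
  shows "a = b \<or> F a b"
  using assms(1)
proof induction
  case base then show ?case by simp
next
  case (step y z) then show ?case using assms(2) by blast
qed

section \<open>The three pair properties behind 2-e.c.\<close>

text \<open>Property (1): any two distinct vertices have a common neighbour.  Applied to the
  complement it becomes property (2).\<close>

definition common_nbrs :: "'a set \<Rightarrow> ('a \<Rightarrow> 'a \<Rightarrow> bool) \<Rightarrow> bool" where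
  "common_nbrs V E \<longleftrightarrow> (\<forall>x\<in>V. \<forall>y\<in>V. x \<noteq> y \<longrightarrow> (\<exists>z. E z x \<and> E z y))"

definition nbrs_distinguish :: "'a set \<Rightarrow> ('a \<Rightarrow> 'a \<Rightarrow> bool) \<Rightarrow> bool" where
  "nbrs_distinguish V E \<longleftrightarrow> (\<forall>x\<in>V. \<forall>y\<in>V. x \<noteq> y \<longrightarrow> (\<exists>z\<in>V. z \<noteq> y \<and> E z x \<and> \<not> E z y))"

text \<open>A two-element set A \<union> B with A, B disjoint splits in one of three ways, up to
  naming its elements; each way corresponds to one of the three pair properties.\<close>

lemma two_set_split:
  assumes "A \<inter> B = {}" "card (A \<union> B) = 2"
  obtains (both) x y where "x \<noteq> y" "A = {x, y}" "B = {}"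
    | (none) x y where "x \<noteq> y" "A = {}" "B = {x, y}"
    | (one) x y where "x \<noteq> y" "A = {x}" "B = {y}"
proof -
  obtain x y where xy: "x \<noteq> y" "A \<union> B = {x, y}" using assms(2) by (meson card_2_iff)
  then have AB: "A \<subseteq> {x, y}" "B = {x, y} - A" using assms(1) by blast+
  consider "x \<in> A" "y \<in> A" | "x \<notin> A" "y \<notin> A" | "x \<in> A" "y \<notin> A" | "x \<notin> A" "y \<in> A"
    by blast
  then show thesis
  proof cases
    case 1
    then have "A = {x, y}" "B = {}" using AB by auto
    then show ?thesis using both xy(1) by blast
  next
    case 2
    then have "A = {}" "B = {x, y}" using AB by auto
    then show ?thesis using none xy(1) by blast
  next
    case 3
    then have "A = {x}" "B = {y}" using AB xy(1) by auto
    then show ?thesis using one xy(1) by blast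
  next
    case 4
    then have "A = {y}" "B = {x}" using AB xy(1) by auto
    then show ?thesis using one[of y x] xy(1) by blast
  qed
qed

lemma n_ec_2_iff:
  assumes sg: "simple_graph V E"
  shows "n_ec 2 V E \<longleftrightarrow>
           common_nbrs V E \<and> common_nbrs V (compl_graph V E) \<and> nbrs_distinguish V E"
proof
  assume ec: "n_ec 2 V E"
  have ext: "\<exists>z\<in>V - (A \<union> B). (\<forall>a\<in>A. E z a) \<and> (\<forall>b\<in>B. \<not> E z b)"
    if "A \<union> B = {x, y}" "A \<inter> B = {}" "x \<in> V" "y \<in> V" "x \<noteq> y" for A B x y
  proof -
    have "A \<subseteq> V" "B \<subseteq> V" "card (A \<union> B) = 2" using that by auto
    then show ?thesis using ec that(2) unfolding n_ec_def by blast
  qed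
  show "common_nbrs V E \<and> common_nbrs V (compl_graph V E) \<and> nbrs_distinguish V E"
    unfolding common_nbrs_def nbrs_distinguish_def
  proof (intro conjI ballI impI)
    fix x y assume xy: "x \<in> V" "y \<in> V" "x \<noteq> y"
    show "\<exists>z. E z x \<and> E z y" using ext[of "{x,y}" "{}"] xy by auto
    show "\<exists>z. compl_graph V E z x \<and> compl_graph V E z y"
      using ext[of "{}" "{x,y}"] xy unfolding compl_graph_iff by auto
    show "\<exists>z\<in>V. z \<noteq> y \<and> E z x \<and> \<not> E z y" using ext[of "{x}" "{y}"] xy by auto
  qed
next
  assume props: "common_nbrs V E \<and> common_nbrs V (compl_graph V E) \<and> nbrs_distinguish V E"
  have irrefl: "\<not> E z z" for z using simple_graphD(5)[OF sg] .
  show "n_ec 2 V E"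
    unfolding n_ec_def
  proof (intro allI impI, elim conjE)
    fix A B assume AB: "A \<subseteq> V" "B \<subseteq> V" "A \<inter> B = {}" "card (A \<union> B) = 2"
    from AB(3,4) show "\<exists>z\<in>V - (A \<union> B). (\<forall>a\<in>A. E z a) \<and> (\<forall>b\<in>B. \<not> E z b)"
    proof (cases rule: two_set_split)
      case (both x y)
      then obtain z where "E z x" "E z y"
        using props AB(1) unfolding common_nbrs_def by blast
      moreover have "z \<in> V" using \<open>E z x\<close> simple_graphD(2)[OF sg] by blast
      ultimately show ?thesis using both irrefl by auto
    next
      case (none x y)
      then obtain z where "compl_graph V E z x" "compl_graph V E z y"
        using props AB(2) unfolding common_nbrs_def by blast
      then show ?thesis using none unfolding compl_graph_iff by auto
    next
      case (one x y)
      then obtain z where "z \<in> V" "z \<noteq> y" "E z x" "\<not> E z y"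
        using props AB(1,2) unfolding nbrs_distinguish_def by blast
      then show ?thesis using one irrefl by auto
    qed
  qed
qed

section \<open>Common neighbours force connectivity and triangles\<close>

lemma common_nbrs_connected:
  assumes "simple_graph V E" "common_nbrs V E"
  shows "graph_connected V E"
  unfolding graph_connected_def
proof (intro ballI)
  fix x y assume "x \<in> V" "y \<in> V"
  show "E\<^sup>*\<^sup>* x y"
  proof (cases "x = y")
    case False
    then obtain z where "E z x" "E z y" using assms(2) \<open>x \<in> V\<close> \<open>y \<in> V\<close>
      unfolding common_nbrs_def by blast
    then have "E x z" using simple_graph_sym[OF assms(1)] by blast
    then show ?thesis using \<open>E z y\<close> by (meson converse_rtranclp_into_rtranclp r_into_rtranclp)
  qed simp
qed

lemma common_nbrs_triangle:
  assumes sg: "simple_graph V E" and "common_nbrs V E" and "E x y"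
  shows "has_triangle E"
proof -
  have "x \<in> V" "y \<in> V" "x \<noteq> y"
    using \<open>E x y\<close> simple_graphD(2,3,5)[OF sg] by (blast, blast, metis)
  then obtain z where zx: "E z x" and zy: "E z y" using assms(2) unfolding common_nbrs_def by blast
  have "z \<noteq> x" "z \<noteq> y" using zx zy simple_graphD(5)[OF sg] by metis+
  moreover have "E y z" "E x z" using zx zy simple_graph_sym[OF sg] by blast+
  ultimately show ?thesis unfolding has_triangle_def using \<open>E x y\<close> \<open>x \<noteq> y\<close> by metis
qed

section \<open>Strongly regular graphs\<close>

lemma srgD:
  assumes "strongly_regular_params V E v k l m"
  shows "simple_graph V E" "card V = v" "x \<in> V \<Longrightarrow> card (nbhd V E x) = k"
    "E x y \<Longrightarrow> card (nbhd V E x \<inter> nbhd V E y) = l"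
    "x \<in> V \<Longrightarrow> y \<in> V \<Longrightarrow> x \<noteq> y \<Longrightarrow> \<not> E x y \<Longrightarrow> card (nbhd V E x \<inter> nbhd V E y) = m"
    "\<exists>x y. E x y" "\<exists>x\<in>V. \<exists>y\<in>V. x \<noteq> y \<and> \<not> E x y"
  using assms unfolding strongly_regular_params_def nbhd_Int by (simp_all add: nbhd_def)

text \<open>Two vertices have a common neighbour iff their neighbourhoods meet in a set of
  positive size; this turns the parameters lambda and mu into existence statements.\<close>

lemma card_common_nbhd_pos_iff:
  assumes sg: "simple_graph V E"
  shows "card (nbhd V E x \<inter> nbhd V E y) > 0 \<longleftrightarrow> (\<exists>w. E x w \<and> E y w)"
proof -
  have "finite (nbhd V E x \<inter> nbhd V E y)" using simple_graphD(1)[OF sg] unfolding nbhd_def by simp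
  then show ?thesis using simple_graphD(3)[OF sg] unfolding nbhd_Int card_gt_0_iff by blast
qed

lemma srg_lambda_pos:
  assumes sr: "strongly_regular_params V E v k l m" and tri: "has_triangle E"
  shows "l > 0"
proof -
  obtain a b c where abc: "E a b" "E b c" "E a c" using tri unfolding has_triangle_def by blast
  then show ?thesis
    using card_common_nbhd_pos_iff[OF srgD(1)[OF sr], of a b] srgD(4)[OF sr abc(1)] by blast
qed

text \<open>A connected strongly regular graph has mu > 0: if mu = 0, adjacency would be
  transitive on distinct vertices, so connectivity would make the graph complete,
  contradicting the existence of a non-edge.\<close>

lemma srg_mu_pos:
  assumes sr: "strongly_regular_params V E v k l m" and conn: "graph_connected V E"
  shows "m > 0"
proof (rule ccontr)
  assume "\<not> m > 0"
  note sg = srgD(1)[OF sr]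
  have trans: "E x z" if "E x y" "E y z" "x \<noteq> z" for x y z
  proof (rule ccontr)
    assume "\<not> E x z"
    have "E z y" using that(2) simple_graph_sym[OF sg] by blast
    then have "card (nbhd V E x \<inter> nbhd V E z) > 0"
      using card_common_nbhd_pos_iff[OF sg] that(1) by blast
    moreover have "x \<in> V" "z \<in> V" using that simple_graphD(2,3)[OF sg] by blast+
    ultimately show False
      using srgD(5)[OF sr _ _ \<open>x \<noteq> z\<close> \<open>\<not> E x z\<close>] \<open>\<not> m > 0\<close> by simp
  qed
  obtain a b where ab: "a \<in> V" "b \<in> V" "a \<noteq> b" "\<not> E a b" using srgD(7)[OF sr] by blast
  then have "E\<^sup>*\<^sup>* a b" using conn unfolding graph_connected_def by blast
  then show False using rtranclp_transitive_adjacency[of E a b] trans ab by blast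
qed

lemma srg_common_nbrs:
  assumes sr: "strongly_regular_params V E v k l m"
    and conn: "graph_connected V E" and tri: "has_triangle E"
  shows "common_nbrs V E"
  unfolding common_nbrs_def
proof (intro ballI impI)
  fix x y assume xy: "x \<in> V" "y \<in> V" "x \<noteq> y"
  note sg = srgD(1)[OF sr]
  have "card (nbhd V E x \<inter> nbhd V E y) > 0"
    using srgD(4,5)[OF sr] srg_lambda_pos[OF sr tri] srg_mu_pos[OF sr conn] xy
    by (cases "E x y") auto
  then obtain w where "E x w" "E y w" using card_common_nbhd_pos_iff[OF sg] by blast
  then show "\<exists>z. E z x \<and> E z y" using simple_graph_sym[OF sg] by blast
qed

lemma card_common_nonnbrs:
  assumes sg: "simple_graph V E" and reg: "\<And>x. x \<in> V \<Longrightarrow> card (nbhd V E x) = k"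
    and xy: "x \<in> V" "y \<in> V" "x \<noteq> y"
  shows "card (nbhd V (compl_graph V E) x \<inter> nbhd V (compl_graph V E) y) + 2 * k
           + (if E x y then 0 else 2) = card V + card (nbhd V E x \<inter> nbhd V E y)"
proof -
  let ?N = "nbhd V E" and ?F = "compl_graph V E"
  have fin: "finite V" using simple_graphD(1)[OF sg] .
  have finN: "finite (?N u)" for u using fin unfolding nbhd_def by simp
  let ?U = "?N x \<union> ?N y \<union> {x, y}"
  have U_sub: "?U \<subseteq> V" using xy unfolding nbhd_def by blast
  have "nbhd V ?F x \<inter> nbhd V ?F y = V - ?U"
    using xy unfolding nbhd_def compl_graph_iff by auto
  then have diff: "card (nbhd V ?F x \<inter> nbhd V ?F y) + card ?U = card V"
    using card_Diff_subset[OF finite_subset[OF U_sub fin] U_sub] card_mono[OF fin U_sub] by simp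
  have incl_excl: "card (?N x \<union> ?N y) + card (?N x \<inter> ?N y) = 2 * k"
    using card_Un_Int[OF finN finN, of x y] reg xy by simp
  have "card ?U = card (?N x \<union> ?N y) + (if E x y then 0 else 2)"
  proof (cases "E x y")
    case True
    then have "?U = ?N x \<union> ?N y"
      using xy simple_graph_sym[OF sg, of x y] unfolding nbhd_def by blast
    then show ?thesis using True by simp
  next
    case False
    then have "(?N x \<union> ?N y) \<inter> {x, y} = {}"
      using simple_graphD(5)[OF sg] simple_graph_sym[OF sg, of x y] unfolding nbhd_def by blast
    then have "card ?U = card (?N x \<union> ?N y) + card {x, y}"
      using finN by (intro card_Un_disjoint) auto
    then show ?thesis using False xy(3) by simp
  qed
  then show ?thesis using diff incl_excl by simp
qed

lemma card_compl_nbhd: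
  assumes sg: "simple_graph V E" and "x \<in> V"
  shows "card (nbhd V (compl_graph V E) x) = card V - (card (nbhd V E x) + 1)"
proof -
  have "nbhd V (compl_graph V E) x = V - insert x (nbhd V E x)"
    using \<open>x \<in> V\<close> unfolding nbhd_def compl_graph_iff by blast
  moreover have "x \<notin> nbhd V E x" using simple_graphD(5)[OF sg] unfolding nbhd_def by blast
  moreover have "insert x (nbhd V E x) \<subseteq> V" using \<open>x \<in> V\<close> unfolding nbhd_def by blast
  ultimately show ?thesis using simple_graphD(1)[OF sg]
    by (simp add: card_Diff_subset finite_subset nbhd_def)
qed

text \<open>The complement of a strongly regular graph with parameters (v, k, lambda, mu) is
  strongly regular with parameters (v, v-k-1, v-2k+mu-2, v-2k+lambda).\<close>

lemma compl_strongly_regular: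
  assumes "strongly_regular V E"
  shows "strongly_regular V (compl_graph V E)"
proof -
  obtain v k l m where sr: "strongly_regular_params V E v k l m"
    using assms unfolding strongly_regular_def by blast
  note sg = srgD(1)[OF sr]
  let ?F = "compl_graph V E"
  have counts: "card (nbhd V ?F x \<inter> nbhd V ?F y) + 2 * k
                  + (if E x y then 0 else 2) = v + card (nbhd V E x \<inter> nbhd V E y)"
    if "x \<in> V" "y \<in> V" "x \<noteq> y" for x y
    using card_common_nonnbrs[OF sg srgD(3)[OF sr] that] srgD(2)[OF sr] by simp
  have "strongly_regular_params V ?F v (v - (k + 1)) (v + m - (2 * k + 2)) (v + l - 2 * k)"
    unfolding strongly_regular_params_def
  proof (intro conjI allI ballI impI)
    show "simple_graph V ?F" using compl_simple_graph[OF sg] .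
    show "card V = v" using srgD(2)[OF sr] .
    show "card {y\<in>V. ?F x y} = v - (k + 1)" if "x \<in> V" for x
      using card_compl_nbhd[OF sg that] srgD(2,3)[OF sr] that unfolding nbhd_def by simp
  next
    fix x y assume "?F x y"
    then have "x \<in> V" "y \<in> V" "x \<noteq> y" "\<not> E x y" unfolding compl_graph_iff by auto
    then show "card {w\<in>V. ?F x w \<and> ?F y w} = v + m - (2 * k + 2)"
      using counts[of x y] srgD(5)[of V E v k l m x y] sr unfolding nbhd_Int by simp
  next
    fix x y assume "x \<in> V" "y \<in> V" "x \<noteq> y \<and> \<not> ?F x y"
    then have "E x y" "x \<noteq> y" unfolding compl_graph_iff by auto
    then show "card {w\<in>V. ?F x w \<and> ?F y w} = v + l - 2 * k"
      using counts[of x y] \<open>x \<in> V\<close> \<open>y \<in> V\<close> srgD(4)[OF sr] unfolding nbhd_Int by simp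
  next
    show "\<exists>x y. ?F x y" using srgD(7)[OF sr] unfolding compl_graph_iff by blast
    obtain x y where "E x y" using srgD(6)[OF sr] by blast
    moreover have "x \<in> V" "y \<in> V" "x \<noteq> y"
      using \<open>E x y\<close> simple_graphD(2,3,5)[OF sg] by (blast, blast, metis)
    ultimately show "\<exists>x\<in>V. \<exists>y\<in>V. x \<noteq> y \<and> \<not> ?F x y" unfolding compl_graph_iff by blast
  qed
  then show ?thesis unfolding strongly_regular_def by blast
qed

lemma srg_large_lambda:
  assumes sr: "strongly_regular_params V E v k l m" and "k - 1 \<le> l"
    and "E u w" "E u z" "z \<noteq> w"
  shows "E w z"
proof -
  let ?N = "nbhd V E"
  have "u \<in> V" "w \<in> ?N u" "z \<in> ?N u" "w \<notin> ?N w"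
    using assms(3-4) simple_graphD(2,3,5)[OF srgD(1)[OF sr]] unfolding nbhd_def by blast+
  have fin: "finite (?N u - {w})" using simple_graphD(1)[OF srgD(1)[OF sr]] unfolding nbhd_def by simp
  have sub: "?N u \<inter> ?N w \<subseteq> ?N u - {w}" using \<open>w \<notin> ?N w\<close> by blast
  have "card (?N u - {w}) = k - 1" using srgD(3)[OF sr \<open>u \<in> V\<close>] \<open>w \<in> ?N u\<close> by simp
  then have "card (?N u - {w}) \<le> card (?N u \<inter> ?N w)" using srgD(4)[OF sr \<open>E u w\<close>] \<open>k - 1 \<le> l\<close> by simp
  then have "?N u \<inter> ?N w = ?N u - {w}" using card_seteq[OF fin sub] by blast
  then show ?thesis using \<open>z \<in> ?N u\<close> \<open>z \<noteq> w\<close> unfolding nbhd_def by blast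
qed

text \<open>Property (3) for an adjacent pair: otherwise lambda = k - 1, and the common neighbour
  of a non-adjacent pair would make that pair adjacent.\<close>

lemma srg_distinguish_edge:
  assumes sr: "strongly_regular_params V E v k l m" and cn: "common_nbrs V E" and "E x y"
  shows "\<exists>z\<in>V. z \<noteq> y \<and> E z x \<and> \<not> E z y"
proof (rule ccontr)
  assume none: "\<not> ?thesis"
  note sg = srgD(1)[OF sr]
  let ?N = "nbhd V E"
  have "x \<in> V" "y \<in> ?N x" using \<open>E x y\<close> simple_graphD(2,3)[OF sg] unfolding nbhd_def by blast+
  have "?N x - {y} \<subseteq> ?N x \<inter> ?N y"
  proof
    fix w assume "w \<in> ?N x - {y}"
    then have "w \<in> V" "E w x" "w \<noteq> y" "w \<in> ?N x"
      using simple_graph_sym[OF sg, of x w] unfolding nbhd_def by blast+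
    then have "E y w" using none simple_graph_sym[OF sg, of w y] by blast
    then show "w \<in> ?N x \<inter> ?N y" using \<open>w \<in> V\<close> \<open>w \<in> ?N x\<close> unfolding nbhd_def by blast
  qed
  moreover have "finite (?N x \<inter> ?N y)" using simple_graphD(1)[OF sg] unfolding nbhd_def by simp
  ultimately have "card (?N x - {y}) \<le> l"
    using card_mono srgD(4)[OF sr \<open>E x y\<close>] by metis
  then have "k - 1 \<le> l" using srgD(3)[OF sr \<open>x \<in> V\<close>] \<open>y \<in> ?N x\<close> by simp
  obtain a b where ab: "a \<in> V" "b \<in> V" "a \<noteq> b" "\<not> E a b" using srgD(7)[OF sr] by blast
  then obtain c where "E c a" "E c b" using cn unfolding common_nbrs_def by blast
  then show False using srg_large_lambda[OF sr \<open>k - 1 \<le> l\<close>] ab by blast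
qed

text \<open>Property (3) in general: a non-adjacent pair x, y of G is the adjacent pair y, x of
  the complement, which is strongly regular too.\<close>

lemma srg_nbrs_distinguish:
  assumes srg: "strongly_regular V E"
    and cn: "common_nbrs V E" and cn_compl: "common_nbrs V (compl_graph V E)"
  shows "nbrs_distinguish V E"
  unfolding nbrs_distinguish_def
proof (intro ballI impI)
  fix x y assume xy: "x \<in> V" "y \<in> V" "x \<noteq> y"
  obtain v k l m where sr: "strongly_regular_params V E v k l m"
    using srg unfolding strongly_regular_def by blast
  obtain v' k' l' m' where sr': "strongly_regular_params V (compl_graph V E) v' k' l' m'"
    using compl_strongly_regular[OF srg] unfolding strongly_regular_def by blast
  show "\<exists>z\<in>V. z \<noteq> y \<and> E z x \<and> \<not> E z y"
  proof (cases "E x y")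
    case True then show ?thesis using srg_distinguish_edge[OF sr cn] by blast
  next
    case False
    then have "compl_graph V E y x"
      using xy simple_graph_sym[OF srgD(1)[OF sr], of x y] unfolding compl_graph_iff by blast
    then obtain z where "z \<in> V" "z \<noteq> x" "compl_graph V E z y" "\<not> compl_graph V E z x"
      using srg_distinguish_edge[OF sr' cn_compl] by blast
    then show ?thesis using xy unfolding compl_graph_iff by blast
  qed
qed

theorem mainTheorem2:
  fixes V :: "'a set" and E :: "'a \<Rightarrow> 'a \<Rightarrow> bool"
  assumes "strongly_regular V E"
  shows "n_ec 2 V E \<longleftrightarrow>
           (graph_connected V E \<and> graph_connected V (compl_graph V E)
            \<and> has_triangle E \<and> has_triangle (compl_graph V E))"
proof -
  let ?F = "compl_graph V E"
  obtain v k l m where sr: "strongly_regular_params V E v k l m"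
    using assms unfolding strongly_regular_def by blast
  obtain v' k' l' m' where sr': "strongly_regular_params V ?F v' k' l' m'"
    using compl_strongly_regular[OF assms] unfolding strongly_regular_def by blast
  note sg = srgD(1)[OF sr] and sg' = srgD(1)[OF sr']
  show ?thesis
  proof
    assume "n_ec 2 V E"
    then have cn: "common_nbrs V E" and cn': "common_nbrs V ?F" using n_ec_2_iff[OF sg] by blast+
    obtain x y where "E x y" using srgD(6)[OF sr] by blast
    obtain x' y' where "?F x' y'" using srgD(6)[OF sr'] by blast
    show "graph_connected V E \<and> graph_connected V ?F \<and> has_triangle E \<and> has_triangle ?F"
      using common_nbrs_connected[OF sg cn] common_nbrs_connected[OF sg' cn']
        common_nbrs_triangle[OF sg cn \<open>E x y\<close>] common_nbrs_triangle[OF sg' cn' \<open>?F x' y'\<close>]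
      by blast
  next
    assume "graph_connected V E \<and> graph_connected V ?F \<and> has_triangle E \<and> has_triangle ?F"
    then have cn: "common_nbrs V E" and cn': "common_nbrs V ?F"
      using srg_common_nbrs[OF sr] srg_common_nbrs[OF sr'] by blast+
    then show "n_ec 2 V E"
      using n_ec_2_iff[OF sg] srg_nbrs_distinguish[OF assms] by blast
  qed
qed

end
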